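(* Let $n\ge1$, $N=\{1,\dots,n\}$, $A=[0,1]$, and let $f$ be an OWA mechanism with weights $w_1,\dots,w_n\in[0,1]$, $\sum_j w_j=1$. Then $f$ is strategy-proof if and only if $w_j=1$ for some $j\in\{1,\dots,n\}$.
   Context: A mechanism is a map $f:A^n\to A$ from profiles $x=(x_i)_{i\in N}$ of reported locations to a facility location; agent $i$ with true location $x_i$ has utility $u(x_i,y)=1-|x_i-y|$ for facility location $y$. An OWA mechanism with weights $w_1,\dots,w_n$ returns $f(x)=\sum_{j=1}^n w_j x_{\pi(j)}$, where $\pi$ is a permutation of $N$ with $x_{\pi(1)}\le\dots\le x_{\pi(n)}$. $f$ is strategy-proof if for every $i\in N$, every $x_{-i}\in A^{n-1}$ and all $x_i,x_i'\in A$: $u(x_i,f(x_i,x_{-i}))\ge u(x_i,f(x_i',x_{-i}))$. *)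

theory Defs
  imports "HOL-Analysis.Analysis"
begin

text \<open>Agents are 0,...,n-1 (the paper's 1,...,n); a profile is a function
  x :: nat => real, of which only the values at i < n matter.
  Weights w are indexed 1,...,n as in the paper.\<close>

definition profiles :: "nat \<Rightarrow> (nat \<Rightarrow> real) set" where
  "profiles n = {x. \<forall>i<n. x i \<in> {0..1}}"

definition utility :: "real \<Rightarrow> real \<Rightarrow> real" where
  "utility xi y = 1 - \<bar>xi - y\<bar>"

definition order_stat :: "nat \<Rightarrow> (nat \<Rightarrow> real) \<Rightarrow> nat \<Rightarrow> real" where
  "order_stat n x j = sort (map x [0..<n]) ! (j - 1)"

definition owa :: "nat \<Rightarrow> (nat \<Rightarrow> real) \<Rightarrow> (nat \<Rightarrow> real) \<Rightarrow> real" where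
  "owa n w x = (\<Sum>j=1..n. w j * order_stat n x j)"

definition strategy_proof :: "nat \<Rightarrow> ((nat \<Rightarrow> real) \<Rightarrow> real) \<Rightarrow> bool" where
  "strategy_proof n f \<longleftrightarrow>
     (\<forall>i<n. \<forall>x\<in>profiles n. \<forall>xi'\<in>{0..1}.
        utility (x i) (f x) \<ge> utility (x i) (f (x(i := xi'))))"

end

theory Submission
  imports Defs
begin

text \<open>Sufficiency: if w j = 1 the mechanism returns the j-th order statistic, and an agent
  can only move an order statistic away from her own location: reporting on the other
  side of it does not change the number of reports below it.
  Necessity: let j be the largest index with w j > 0 and suppose w j < 1. At the sorted
  profile (0,...,0,w j,1,...,1), with w j in position j, the mechanism returns w j * w j,
  while the agent located at w j who reports 1 instead moves the facility exactly to her
  location w j.\<close>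

lemma sorted_nth_ge_iff:
  fixes s :: "'a :: linorder list"
  assumes "sorted s" and "i < length s"
  shows "v \<le> s ! i \<longleftrightarrow> length (filter (\<lambda>a. a < v) s) \<le> i"
  using assms
proof (induction s arbitrary: i)
  case Nil
  then show ?case by simp
next
  case (Cons a s)
  then have a_min: "\<forall>b\<in>set s. a \<le> b" by simp
  show ?case
  proof (cases i)
    case 0
    then show ?thesis using a_min by (auto simp: filter_empty_conv)
  next
    case (Suc i')
    then have "v \<le> s ! i' \<longleftrightarrow> length (filter (\<lambda>a. a < v) s) \<le> i'"
      using Cons by simp
    moreover have "s ! i' \<in> set s" using Cons.prems(2) Suc by simp
    ultimately show ?thesis
      using a_min Suc by (cases "a < v") (auto simp: filter_empty_conv)
  qed
qed

lemma order_stat_ge_iff: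
  assumes "j \<in> {1..n}"
  shows "v \<le> order_stat n x j \<longleftrightarrow> card {k. k < n \<and> x k < v} \<le> j - 1"
proof -
  let ?xs = "map x [0..<n]"
  have "length (filter (\<lambda>a. a < v) (sort ?xs)) = length (filter (\<lambda>a. a < v) ?xs)"
    by (metis mset_filter mset_sort size_mset)
  also have "\<dots> = card {k. k < n \<and> x k < v}"
    by (simp add: length_filter_conv_card cong: conj_cong)
  finally show ?thesis
    using sorted_nth_ge_iff[of "sort ?xs" "j - 1" v] assms by (auto simp: order_stat_def)
qed

lemma order_stat_update_ge:
  assumes "j \<in> {1..n}" and "x i < order_stat n x j"
  shows "order_stat n x j \<le> order_stat n (x(i := z)) j"
proof -
  let ?y = "order_stat n x j"
  have "{k. k < n \<and> (x(i := z)) k < ?y} \<subseteq> {k. k < n \<and> x k < ?y}"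
    using assms(2) by auto
  then have "card {k. k < n \<and> (x(i := z)) k < ?y} \<le> card {k. k < n \<and> x k < ?y}"
    by (intro card_mono) auto
  also have "\<dots> \<le> j - 1"
    using order_stat_ge_iff[OF assms(1), of ?y x] by simp
  finally show ?thesis
    using order_stat_ge_iff[OF assms(1)] by simp
qed

lemma order_stat_update_le:
  assumes "j \<in> {1..n}" and "order_stat n x j < x i"
  shows "order_stat n (x(i := z)) j \<le> order_stat n x j"
proof (rule ccontr)
  let ?y = "order_stat n x j" and ?y' = "order_stat n (x(i := z)) j"
  assume "\<not> ?y' \<le> ?y"
  define v where "v = min ?y' (x i)"
  have "{k. k < n \<and> x k < v} \<subseteq> {k. k < n \<and> (x(i := z)) k < v}"
    by (auto simp: v_def)
  then have "card {k. k < n \<and> x k < v} \<le> card {k. k < n \<and> (x(i := z)) k < v}"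
    by (intro card_mono) auto
  also have "\<dots> \<le> j - 1"
    using order_stat_ge_iff[OF assms(1), of v "x(i := z)"] by (simp add: v_def)
  finally have "v \<le> ?y"
    using order_stat_ge_iff[OF assms(1)] by simp
  then show False
    using assms(2) \<open>\<not> ?y' \<le> ?y\<close> by (simp add: v_def)
qed

lemma strategy_proof_order_stat:
  assumes "j \<in> {1..n}"
  shows "strategy_proof n (\<lambda>x. order_stat n x j)"
proof -
  have "\<bar>x i - order_stat n x j\<bar> \<le> \<bar>x i - order_stat n (x(i := z)) j\<bar>" for x i z
    using order_stat_update_ge[OF assms, of x i z] order_stat_update_le[OF assms, of x i z]
    by (cases "x i" "order_stat n x j" rule: linorder_cases) auto
  then show ?thesis
    by (simp add: strategy_proof_def utility_def)
qed

lemma owa_eq_order_stat: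
  assumes "\<forall>k\<in>{1..n}. w k \<ge> 0" and "(\<Sum>k=1..n. w k) = 1"
    and "j \<in> {1..n}" and "w j = 1"
  shows "owa n w = (\<lambda>x. order_stat n x j)"
proof -
  have "(\<Sum>k\<in>{1..n} - {j}. w k) = 0"
    using assms by (simp add: sum.remove)
  then have others: "\<forall>k\<in>{1..n} - {j}. w k = 0"
    using assms(1) by (subst sum_nonneg_eq_0_iff[symmetric]) auto
  show ?thesis
  proof
    fix x
    show "owa n w x = order_stat n x j"
      using assms(3,4) others by (simp add: owa_def sum.remove)
  qed
qed

definition step_profile :: "nat \<Rightarrow> real \<Rightarrow> nat \<Rightarrow> real" where
  "step_profile m t k = (if k < m then 0 else if k = m then t else 1)"

lemma step_profile_in_profiles:
  "t \<in> {0..1} \<Longrightarrow> step_profile m t \<in> profiles n"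
  by (auto simp: step_profile_def profiles_def)

lemma order_stat_step_profile:
  assumes "t \<in> {0..1}" and "k \<in> {1..n}"
  shows "order_stat n (step_profile m t) k = step_profile m t (k - 1)"
proof -
  have "sorted (map (step_profile m t) [0..<n])"
    using assms(1) by (auto simp: sorted_iff_nth_mono step_profile_def)
  moreover have "k - 1 < n"
    using assms(2) by auto
  ultimately show ?thesis
    by (simp add: order_stat_def sorted_sort_id)
qed

lemma owa_step_profile:
  assumes "t \<in> {0..1}" and "j \<in> {1..n}" and "\<forall>k\<in>{j<..n}. w k = 0"
  shows "owa n w (step_profile (j - 1) t) = w j * t"
proof -
  have "owa n w (step_profile (j - 1) t) = (\<Sum>k=1..n. if k = j then w j * t else 0)"
    unfolding owa_def
  proof (rule sum.cong)
    fix k assume "k \<in> {1..n}"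
    then show "w k * order_stat n (step_profile (j - 1) t) k = (if k = j then w j * t else 0)"
      using assms by (auto simp: order_stat_step_profile step_profile_def)
  qed simp
  then show ?thesis
    using assms(2) by simp
qed

lemma strategy_proofD:
  assumes "strategy_proof n f" and "i < n" and "x \<in> profiles n" and "t \<in> {0..1}"
  shows "utility (x i) (f (x(i := t))) \<le> utility (x i) (f x)"
  using assms unfolding strategy_proof_def by blast

lemma owa_not_strategy_proof:
  assumes "j \<in> {1..n}" and "\<forall>k\<in>{j<..n}. w k = 0" and "0 < w j" and "w j < 1"
  shows "\<not> strategy_proof n (owa n w)"
proof
  let ?x = "step_profile (j - 1) (w j)"
  assume "strategy_proof n (owa n w)"
  moreover have "?x \<in> profiles n" and "j - 1 < n"
    using assms by (auto intro: step_profile_in_profiles)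
  ultimately have
    "utility (?x (j - 1)) (owa n w (?x(j - 1 := 1))) \<le> utility (?x (j - 1)) (owa n w ?x)"
    by (intro strategy_proofD) auto
  moreover have "?x(j - 1 := 1) = step_profile (j - 1) 1"
    by (auto simp: step_profile_def)
  moreover have "owa n w ?x = w j * w j"
    using owa_step_profile[of "w j" j n w] assms by simp
  moreover have "owa n w (step_profile (j - 1) 1) = w j"
    using owa_step_profile[of 1 j n w] assms by simp
  ultimately have "utility (w j) (w j) \<le> utility (w j) (w j * w j)"
    by (simp add: step_profile_def)
  moreover have "w j * w j < w j"
    using assms by (simp add: mult_less_cancel_left1)
  ultimately show False
    by (simp add: utility_def)
qed

lemma last_positive_weight:
  fixes w :: "nat \<Rightarrow> real"
  assumes "\<forall>k\<in>{1..n}. w k \<ge> 0" and "(\<Sum>k=1..n. w k) = 1"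
  obtains j where "j \<in> {1..n}" and "0 < w j" and "\<forall>k\<in>{j<..n}. w k = 0"
proof -
  define P where "P = {k \<in> {1..n}. 0 < w k}"
  have "finite P"
    by (simp add: P_def)
  have "P \<noteq> {}"
  proof
    assume "P = {}"
    then have "\<forall>k\<in>{1..n}. w k = 0"
      using assms(1) by (force simp: P_def)
    then show False
      using assms(2) by simp
  qed
  define j where "j = Max P"
  have "j \<in> P"
    using \<open>finite P\<close> \<open>P \<noteq> {}\<close> by (simp add: j_def)
  moreover have "w k = 0" if "k \<in> {j<..n}" for k
  proof -
    have "k \<notin> P"
      using that Max_ge[OF \<open>finite P\<close>] by (force simp: j_def)
    moreover have "k \<in> {1..n}"
      using that \<open>j \<in> P\<close> by (simp add: P_def)
    ultimately show ?thesis
      using assms(1) by (force simp: P_def)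
  qed
  ultimately show ?thesis
    using that[of j] by (auto simp: P_def)
qed

theorem proposition2:
  fixes n :: nat and w :: "nat \<Rightarrow> real"
  assumes "n \<ge> 1"
    and "\<forall>j\<in>{1..n}. w j \<in> {0..1}"
    and "(\<Sum>j=1..n. w j) = 1"
  shows "strategy_proof n (owa n w) \<longleftrightarrow> (\<exists>j\<in>{1..n}. w j = 1)"
proof
  assume "strategy_proof n (owa n w)"
  have nonneg: "\<forall>k\<in>{1..n}. w k \<ge> 0"
    using assms(2) by simp
  obtain j where "j \<in> {1..n}" and "0 < w j" and "\<forall>k\<in>{j<..n}. w k = 0"
    using last_positive_weight[OF nonneg assms(3)] .
  moreover have "w j \<le> 1"
    using assms(2) \<open>j \<in> {1..n}\<close> by simp
  ultimately show "\<exists>j\<in>{1..n}. w j = 1"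
    using owa_not_strategy_proof \<open>strategy_proof n (owa n w)\<close> by fastforce
next
  assume "\<exists>j\<in>{1..n}. w j = 1"
  then obtain j where "j \<in> {1..n}" and "w j = 1" ..
  then have "owa n w = (\<lambda>x. order_stat n x j)"
    using assms(2,3) by (intro owa_eq_order_stat) auto
  then show "strategy_proof n (owa n w)"
    using strategy_proof_order_stat \<open>j \<in> {1..n}\<close> by simp
qed

end
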